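(* Let $k\geq 1$ and $n\geq k+2$ be integers, and let $T_n$ be any $k$-tree with $n$ vertices. Then $$\det({\sf D}^{k}(T_n))=(-1)^{k(n-k)}\,k\,(k+1)^{n-k-1}(n-k).$$
   Context: A $k$-tree is either the complete graph on $k$ vertices, or a graph obtained from a smaller $k$-tree by adding a new vertex joined by $k$ edges to all vertices of a $k$-clique (complete subgraph on $k$ vertices). In a $k$-tree $T$, for $k$-cliques $\tau,\tau'$, a $k$-walk from $\tau$ to $\tau'$ is a sequence $\tau_1\sigma_1\tau_2\sigma_2\cdots\tau_l$ with $\tau_1=\tau$, $\tau_l=\tau'$, the $\tau_i$ being $k$-cliques and $\sigma_i$ a $(k+1)$-clique containing both $\tau_i$ and $\tau_{i+1}$; the $k$-distance $\operatorname{dist}^k(\tau,\tau')$ is the number of $(k+1)$-cliques in a shortest such walk. If $T$ has $c$ $k$-cliques $\tau_1,\dots,\tau_c$ (in any fixed order), the $k$-distance matrix ${\sf D}^k(T)$ is the $c\times c$ integer matrix with $(i,j)$-entry $0$ if $i=j$ and $\operatorname{dist}^k(\tau_i,\tau_j)$ otherwise (the determinant does not depend on the chosen order). *)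

theory Defs
  imports Main "Jordan_Normal_Form.Determinant"
begin

text \<open>Simple graphs: a vertex set V and an edge set E of 2-element subsets.\<close>

definition complete_edges :: "'a set \<Rightarrow> 'a set set" where
  "complete_edges V = {{u, v} | u v. u \<in> V \<and> v \<in> V \<and> u \<noteq> v}"

definition is_clique :: "'a set \<Rightarrow> 'a set set \<Rightarrow> 'a set \<Rightarrow> bool" where
  "is_clique V E C \<longleftrightarrow> C \<subseteq> V \<and> (\<forall>u\<in>C. \<forall>v\<in>C. u \<noteq> v \<longrightarrow> {u, v} \<in> E)"

definition is_mclique :: "nat \<Rightarrow> 'a set \<Rightarrow> 'a set set \<Rightarrow> 'a set \<Rightarrow> bool" where
  "is_mclique m V E C \<longleftrightarrow> is_clique V E C \<and> finite C \<and> card C = m"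

inductive ktree :: "nat \<Rightarrow> 'a set \<Rightarrow> 'a set set \<Rightarrow> bool" for k where
  base: "finite V \<Longrightarrow> card V = k \<Longrightarrow> ktree k V (complete_edges V)"
| step: "ktree k V E \<Longrightarrow> x \<notin> V \<Longrightarrow> is_mclique k V E C \<Longrightarrow>
         ktree k (insert x V) (E \<union> {{x, c} | c. c \<in> C})"

text \<open>A k-walk from ts!0 to last ts: a sequence tau_1 sigma_1 tau_2 ... tau_l of k-cliques tau_i
  and (k+1)-cliques sigma_i with tau_i, tau_(i+1) contained in sigma_i.\<close>
definition kwalk :: "nat \<Rightarrow> 'a set \<Rightarrow> 'a set set \<Rightarrow> 'a set list \<Rightarrow> 'a set list \<Rightarrow> bool" where
  "kwalk k V E ts ss \<longleftrightarrow> ts \<noteq> [] \<and> length ss + 1 = length ts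
     \<and> (\<forall>t\<in>set ts. is_mclique k V E t) \<and> (\<forall>s\<in>set ss. is_mclique (k + 1) V E s)
     \<and> (\<forall>i<length ss. ts ! i \<subseteq> ss ! i \<and> ts ! Suc i \<subseteq> ss ! i)"

definition kdist :: "nat \<Rightarrow> 'a set \<Rightarrow> 'a set set \<Rightarrow> 'a set \<Rightarrow> 'a set \<Rightarrow> nat" where
  "kdist k V E t t' = (LEAST m. \<exists>ts ss. kwalk k V E ts ss \<and> hd ts = t \<and> last ts = t'
                                        \<and> length ss = m)"

definition kcliques :: "nat \<Rightarrow> 'a set \<Rightarrow> 'a set set \<Rightarrow> 'a set set" where
  "kcliques k V E = {C. is_mclique k V E C}"

definition kdist_matrix :: "nat \<Rightarrow> 'a set \<Rightarrow> 'a set set \<Rightarrow> 'a set list \<Rightarrow> int mat" where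
  "kdist_matrix k V E cs = mat (length cs) (length cs)
     (\<lambda>(i, j). if i = j then 0 else int (kdist k V E (cs ! i) (cs ! j)))"

end

(* Induction along the construction of the k-tree. Adding a vertex x joined to a k-clique C
   creates one (k+1)-clique, C plus x, and k new k-cliques, C minus c plus x: they are pairwise at
   k-distance 1, each lies at distance d(C, t) + 1 from every old k-clique t, and distances between
   old k-cliques do not change. Upper bounds come from explicit walks, lower bounds from potentials
   on k-cliques that change by at most 1 inside every (k+1)-clique.
   Hence the new distance matrix arises from the old one by attaching k mutually adjacent pendants
   of C. Row and column operations turn such an attachment into the recurrence
   u (m + 2) = -2 u (m + 1) - u m, with double root -1, both for the determinant and for the
   determinant of the matrix bordered by ones; solving both along the construction gives the
   closed forms ktree_dist_det and ktree_border_det. *)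

theory Submission
  imports Defs
begin

definition square_mat_of :: "(nat \<Rightarrow> nat \<Rightarrow> 'a) \<Rightarrow> nat \<Rightarrow> 'a mat" where
  "square_mat_of f n = mat n n (\<lambda>(i, j). f i j)"

lemma square_mat_of_carrier [simp]: "square_mat_of f n \<in> carrier_mat n n"
  by (simp add: square_mat_of_def)

lemma square_mat_of_dim [simp]: "dim_row (square_mat_of f n) = n" "dim_col (square_mat_of f n) = n"
  by (simp_all add: square_mat_of_def)

lemma square_mat_of_index [simp]: "i < n \<Longrightarrow> j < n \<Longrightarrow> square_mat_of f n $$ (i, j) = f i j"
  by (simp add: square_mat_of_def)

lemma square_mat_of_cong:
  "(\<And>i j. i < n \<Longrightarrow> j < n \<Longrightarrow> f i j = g i j) \<Longrightarrow> square_mat_of f n = square_mat_of g n"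
  by (rule eq_matI) auto

lemma det_square_mat_of_cong:
  "(\<And>i j. i < n \<Longrightarrow> j < n \<Longrightarrow> f i j = g i j) \<Longrightarrow> det (square_mat_of f n) = det (square_mat_of g n)"
  by (metis square_mat_of_cong)

lemma mat_delete_square_mat_of:
  "mat_delete (square_mat_of f (Suc n)) i j =
     square_mat_of (\<lambda>i' j'. f (if i' < i then i' else Suc i') (if j' < j then j' else Suc j')) n"
  by (rule eq_matI) (auto simp: mat_delete_def square_mat_of_def)

lemma cofactor_square_mat_of_cong:
  assumes "\<And>i' j'. i' < Suc n \<Longrightarrow> j' < Suc n \<Longrightarrow> i' \<noteq> i \<Longrightarrow> j' \<noteq> j \<Longrightarrow> f i' j' = g i' j'"
  shows "cofactor (square_mat_of f (Suc n)) i j = cofactor (square_mat_of g (Suc n)) i j"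
proof -
  have "mat_delete (square_mat_of f (Suc n)) i j = mat_delete (square_mat_of g (Suc n)) i j"
    unfolding mat_delete_square_mat_of by (rule square_mat_of_cong) (use assms in auto)
  then show ?thesis
    by (simp add: cofactor_def)
qed

lemma det_square_mat_of_0 [simp]: "det (square_mat_of f 0) = 1"
  by (simp add: det_def square_mat_of_def)

lemma det_square_mat_of_last_col_zero:
  fixes f :: "nat \<Rightarrow> nat \<Rightarrow> 'a :: comm_ring_1"
  assumes "\<And>i. i < n \<Longrightarrow> f i n = 0"
  shows "det (square_mat_of f (Suc n)) = f n n * det (square_mat_of f n)"
proof -
  have "det (square_mat_of f (Suc n)) =
      (\<Sum>i<Suc n. square_mat_of f (Suc n) $$ (i, n) * cofactor (square_mat_of f (Suc n)) i n)"
    by (rule laplace_expansion_column) auto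
  also have "\<dots> = f n n * cofactor (square_mat_of f (Suc n)) n n"
    using assms by (simp add: lessThan_Suc)
  also have "cofactor (square_mat_of f (Suc n)) n n = det (square_mat_of f n)"
    unfolding cofactor_def mat_delete_square_mat_of by (simp cong: square_mat_of_cong)
  finally show ?thesis .
qed

lemma det_permute_rows_cols:
  fixes A :: "'a :: comm_ring_1 mat"
  assumes A: "A \<in> carrier_mat n n" and p: "p permutes {0..<n}"
  shows "det (mat n n (\<lambda>(i, j). A $$ (p i, p j))) = det A"
proof -
  define B where "B = mat n n (\<lambda>(i, j). A $$ (p i, j))"
  have B: "B \<in> carrier_mat n n" and BT: "transpose_mat B \<in> carrier_mat n n"
    by (simp_all add: B_def)
  have "mat n n (\<lambda>(i, j). A $$ (p i, p j)) =
      transpose_mat (mat n n (\<lambda>(i, j). transpose_mat B $$ (p i, j)))"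
    using p by (intro eq_matI) (auto simp: B_def permutes_in_image)
  then have "det (mat n n (\<lambda>(i, j). A $$ (p i, p j))) = signof p * det (transpose_mat B)"
    using det_permute_rows[OF BT p] by (simp add: det_transpose[of _ n])
  also have "\<dots> = signof p * signof p * det A"
    using det_permute_rows[OF A p] det_transpose[OF B] by (simp add: B_def)
  also have "\<dots> = det A"
    by (simp flip: of_int_mult)
  finally show ?thesis .
qed

lemma det_square_mat_of_reindex:
  fixes F :: "'b \<Rightarrow> 'b \<Rightarrow> 'a :: comm_ring_1"
  assumes "distinct xs" "distinct ys" "set xs = set ys"
  shows "det (square_mat_of (\<lambda>i j. F (xs ! i) (xs ! j)) (length xs)) =
         det (square_mat_of (\<lambda>i j. F (ys ! i) (ys ! j)) (length ys))"
proof -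
  have "mset xs = mset ys"
    using assms by (metis mset_set_set)
  then obtain p where p: "p permutes {..<length ys}" "permute_list p ys = xs"
    by (rule mset_eq_permutation)
  have len: "length xs = length ys"
    using p(2) by (metis length_permute_list)
  have nth: "xs ! i = ys ! p i" and p_less: "p i < length ys" if "i < length ys" for i
    using permute_list_nth[OF p(1) that] p(2) permutes_in_image[OF p(1)] that by auto
  have "square_mat_of (\<lambda>i j. F (xs ! i) (xs ! j)) (length xs) =
      mat (length ys) (length ys)
        (\<lambda>(i, j). square_mat_of (\<lambda>i j. F (ys ! i) (ys ! j)) (length ys) $$ (p i, p j))"
    by (intro eq_matI) (auto simp: len nth p_less)
  then show ?thesis
    using det_permute_rows_cols[OF square_mat_of_carrier, of p] p(1) by (simp add: atLeast0LessThan)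
qed

lemma det_addrow_addcol:
  fixes A :: "'a :: comm_ring_1 mat"
  assumes "A \<in> carrier_mat n n" "l < n" "k \<noteq> l"
  shows "det (addcol c k l (addrow c k l A)) = det A"
  using assms by (simp add: det_addrow)

(* Subtracting row and column a from row and column Suc a leaves 1 and -2 as the only nonzero
   entries of the last row. *)
lemma det_square_mat_of_twins:
  fixes g :: "nat \<Rightarrow> nat \<Rightarrow> 'a :: comm_ring_1"
  assumes "\<And>j. j < a \<Longrightarrow> g (Suc a) j = g a j" "\<And>i. i < a \<Longrightarrow> g i (Suc a) = g i a"
    and "g a (Suc a) = 1" "g (Suc a) a = 1" "g a a = 0" "g (Suc a) (Suc a) = 0"
  shows "det (square_mat_of g (Suc (Suc a))) = - 2 * det (square_mat_of g (Suc a)) - det (square_mat_of g a)"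
proof -
  define h where "h i j =
    (if i \<le> a \<and> j \<le> a then g i j else if i = Suc a \<and> j = Suc a then - 2
     else if i = Suc a \<and> j = a then 1 else if i = a \<and> j = Suc a then 1 else 0)" for i j
  have "addcol (- 1) (Suc a) a (addrow (- 1) (Suc a) a (square_mat_of g (Suc (Suc a)))) =
      square_mat_of h (Suc (Suc a))"
    unfolding h_def using assms by (intro eq_matI) (auto simp: less_Suc_eq not_less_eq_eq)
  then have "det (square_mat_of g (Suc (Suc a))) = det (square_mat_of h (Suc (Suc a)))"
    using det_addrow_addcol[of "square_mat_of g (Suc (Suc a))" "Suc (Suc a)" a "Suc a" "- 1"] by simp
  also have "\<dots> = (\<Sum>j<Suc (Suc a). square_mat_of h (Suc (Suc a)) $$ (Suc a, j) *
      cofactor (square_mat_of h (Suc (Suc a))) (Suc a) j)"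
    by (rule laplace_expansion_row) auto
  also have "\<dots> = cofactor (square_mat_of h (Suc (Suc a))) (Suc a) a
      - 2 * cofactor (square_mat_of h (Suc (Suc a))) (Suc a) (Suc a)"
    by (simp add: lessThan_Suc h_def)
  also have "cofactor (square_mat_of h (Suc (Suc a))) (Suc a) (Suc a) = det (square_mat_of g (Suc a))"
    unfolding cofactor_def mat_delete_square_mat_of by (simp, rule det_square_mat_of_cong) (auto simp: h_def)
  also have "cofactor (square_mat_of h (Suc (Suc a))) (Suc a) a = - det (square_mat_of g a)"
  proof -
    define h' where "h' i j = h (if i < Suc a then i else Suc i) (if j < a then j else Suc j)" for i j
    have "det (square_mat_of h' (Suc a)) = h' a a * det (square_mat_of h' a)"
      by (rule det_square_mat_of_last_col_zero) (simp add: h'_def h_def)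
    also have "\<dots> = det (square_mat_of g a)"
      by (simp add: h'_def h_def, rule det_square_mat_of_cong) (simp add: h'_def h_def)
    finally show ?thesis
      unfolding cofactor_def mat_delete_square_mat_of h'_def by simp
  qed
  finally show ?thesis by simp
qed

definition border :: "(nat \<Rightarrow> nat \<Rightarrow> 'a :: zero_neq_one) \<Rightarrow> nat \<Rightarrow> nat \<Rightarrow> 'a" where
  "border f i j = (if i = 0 \<and> j = 0 then 0 else if i = 0 \<or> j = 0 then 1 else f (i - 1) (j - 1))"

lemma square_mat_of_border_cong:
  assumes "square_mat_of f n = square_mat_of g n"
  shows "square_mat_of (border f) (Suc n) = square_mat_of (border g) (Suc n)"
proof -
  have "f i j = g i j" if "i < n" "j < n" for i j
    using arg_cong[OF assms, of "\<lambda>A. A $$ (i, j)"] that by simp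
  then show ?thesis
    by (intro square_mat_of_cong) (auto simp: border_def)
qed

(* Subtracting row and column p from row and column a leaves ones in the last row and column and
   -2 in the corner; expanding along the last row splits off the bordered matrix, with index a
   moved to the front. *)
lemma det_square_mat_of_pendant:
  fixes g :: "nat \<Rightarrow> nat \<Rightarrow> 'a :: comm_ring_1"
  assumes p: "p < a"
    and "\<And>j. j < a \<Longrightarrow> g a j = g p j + 1" "\<And>i. i < a \<Longrightarrow> g i a = g i p + 1"
    and "g a a = 0" "g p p = 0"
  shows "det (square_mat_of g (Suc a)) = det (square_mat_of (border g) (Suc a)) - 2 * det (square_mat_of g a)"
proof -
  define h where "h i j = (if i < a \<and> j < a then g i j else if i = a \<and> j = a then - 2 else 1)" for i j
  define h0 where "h0 i j = (if i = a \<and> j = a then 0 else h i j)" for i j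
  have "addcol (- 1) a p (addrow (- 1) a p (square_mat_of g (Suc a))) = square_mat_of h (Suc a)"
    unfolding h_def using assms by (intro eq_matI) (auto simp: less_Suc_eq)
  then have "det (square_mat_of g (Suc a)) = det (square_mat_of h (Suc a))"
    using det_addrow_addcol[of "square_mat_of g (Suc a)" "Suc a" p a "- 1"] p by simp
  also have "\<dots> = (\<Sum>j<Suc a. square_mat_of h (Suc a) $$ (a, j) * cofactor (square_mat_of h (Suc a)) a j)"
    by (rule laplace_expansion_row) auto
  also have "\<dots> = (\<Sum>j<Suc a. square_mat_of h0 (Suc a) $$ (a, j) * cofactor (square_mat_of h0 (Suc a)) a j)
      - 2 * cofactor (square_mat_of h (Suc a)) a a"
    using cofactor_square_mat_of_cong[of a a _ h h0] by (simp add: lessThan_Suc h0_def h_def)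
  also have "(\<Sum>j<Suc a. square_mat_of h0 (Suc a) $$ (a, j) * cofactor (square_mat_of h0 (Suc a)) a j) =
      det (square_mat_of h0 (Suc a))"
    by (rule laplace_expansion_row[symmetric]) auto
  also have "cofactor (square_mat_of h (Suc a)) a a = det (square_mat_of g a)"
    unfolding cofactor_def mat_delete_square_mat_of by (simp, rule det_square_mat_of_cong) (auto simp: h_def)
  also have "det (square_mat_of h0 (Suc a)) = det (square_mat_of (border g) (Suc a))"
  proof -
    define rot where "rot i = (if i = 0 then a else if i \<le> a then i - 1 else i)" for i
    have "rot permutes {0..<Suc a}"
    proof (rule bij_imp_permutes)
      show "bij_betw rot {0..<Suc a} {0..<Suc a}"
        by (rule bij_betwI[where g = "\<lambda>i. if i = a then 0 else if i < a then Suc i else i"])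
           (auto simp: rot_def)
    qed (auto simp: rot_def)
    moreover have "square_mat_of (border g) (Suc a) =
        mat (Suc a) (Suc a) (\<lambda>(i, j). square_mat_of h0 (Suc a) $$ (rot i, rot j))"
      by (rule eq_matI) (auto simp: rot_def border_def h0_def h_def)
    ultimately show ?thesis
      using det_permute_rows_cols[OF square_mat_of_carrier[of h0 "Suc a"]] by simp
  qed
  finally show ?thesis by simp
qed

lemma det_square_mat_of_border_pendant:
  fixes g :: "nat \<Rightarrow> nat \<Rightarrow> 'a :: comm_ring_1"
  assumes p: "p < a"
    and "\<And>j. j < a \<Longrightarrow> g a j = g p j + 1" "\<And>i. i < a \<Longrightarrow> g i a = g i p + 1"
    and "g a a = 0" "g p p = 0"
  shows "det (square_mat_of (border g) (Suc (Suc a))) = - 2 * det (square_mat_of (border g) (Suc a))"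
proof -
  define b n q where "b = border g" and "n = Suc a" and "q = Suc p"
  have q: "0 < q" "q < n"
    using p by (simp_all add: n_def q_def)
  have b_pendant: "b n j - b q j = 1" if "0 < j" "j < n" for j
    using that assms by (auto simp: b_def n_def q_def border_def)
  have b_pendant': "b i n - b i q = b i 0" if "i < n" for i
    using that assms by (auto simp: b_def n_def q_def border_def)
  have b_border: "b i 0 = 1" "b 0 i = 1" if "0 < i" "i \<le> n" for i
    using that by (auto simp: b_def border_def)
  have b_diag: "b 0 0 = 0" "b n n = 0" "b q q = 0"
    using assms by (auto simp: b_def n_def q_def border_def)
  have b_pendant_corner: "b n 0 - b q 0 = 0" "b n q = 1" "b q n = 1"
    using b_border b_pendant[of q] b_pendant'[of q] q b_diag by auto
  define h where "h i j = (if i < n \<and> j < n then b i j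
      else if j = n then (if i = n then - 2 else 0) else if j = 0 then 0 else 1)" for i j
  have "addcol (- 1) n 0 (addcol (- 1) n q (addrow (- 1) n q (square_mat_of b (Suc n)))) =
      square_mat_of h (Suc n)" (is "addcol _ _ _ ?B = _")
    unfolding h_def using q b_pendant b_pendant' b_border b_diag b_pendant_corner
    by (intro eq_matI) (auto simp: less_Suc_eq)
  moreover have "det (addcol (- 1) n 0 ?B) = det ?B"
    by (rule det_addcol[of 0 "Suc n"]) (use q in auto)
  ultimately have "det (square_mat_of b (Suc n)) = det (square_mat_of h (Suc n))"
    using det_addrow_addcol[of "square_mat_of b (Suc n)" "Suc n" q n "- 1"] q by simp
  also have "\<dots> = h n n * det (square_mat_of h n)"
    by (rule det_square_mat_of_last_col_zero) (simp add: h_def)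
  also have "h n n = - 2"
    by (simp add: h_def)
  also have "square_mat_of h n = square_mat_of b n"
    by (rule square_mat_of_cong) (simp add: h_def)
  finally show ?thesis
    unfolding b_def n_def by simp
qed

lemma double_root_recurrence:
  fixes u :: "nat \<Rightarrow> 'a :: comm_ring_1"
  assumes "\<And>m. u (m + 2) = - 2 * u (m + 1) - u m"
  shows "u m = (- 1) ^ m * (u 0 - of_nat m * (u 1 + u 0))"
proof -
  define a b where "a = u 0" and "b = u 1 + u 0"
  have "u m = (- 1) ^ m * (a - of_nat m * b) \<and>
      u (Suc m) = (- 1) ^ Suc m * (a - of_nat (Suc m) * b)"
  proof (induction m)
    case 0
    show ?case
      by (simp add: a_def b_def)
  next
    case (Suc m)
    have "u (Suc (Suc m)) = - 2 * u (Suc m) - u m"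
      using assms[of m] by (simp add: numeral_2_eq_2)
    also have "\<dots> = - 2 * ((- 1) ^ Suc m * (a - of_nat (Suc m) * b)) - (- 1) ^ m * (a - of_nat m * b)"
      using Suc.IH by (simp only:)
    also have "\<dots> = (- 1) ^ Suc (Suc m) * (a - of_nat (Suc (Suc m)) * b)"
      by (simp add: algebra_simps)
    finally show ?case
      using Suc.IH by simp
  qed
  then show ?thesis
    by (simp add: a_def b_def)
qed

(* The indices N, N + 1, ... are at distance 1 from each other and one step further than p from
   all old indices: the k-distances created by attaching a vertex to the k-clique with index p. *)
definition pendant_ext :: "(nat \<Rightarrow> nat \<Rightarrow> 'a :: {zero_neq_one, plus}) \<Rightarrow> nat \<Rightarrow> nat \<Rightarrow> nat \<Rightarrow> nat \<Rightarrow> 'a" where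
  "pendant_ext f N p i j =
    (if i < N \<and> j < N then f i j else if i < N then f i p + 1 else if j < N then f p j + 1
     else if i = j then 0 else 1)"

lemma det_border_pendant_ext:
  fixes f :: "nat \<Rightarrow> nat \<Rightarrow> 'a :: comm_ring_1"
  assumes p: "p < N" and "f p p = 0"
  shows "det (square_mat_of (border (pendant_ext f N p)) (Suc (N + m))) =
    (- 1) ^ m * (of_nat m + 1) * det (square_mat_of (border f) (Suc N))"
proof -
  define u where "u m = det (square_mat_of (border (pendant_ext f N p)) (Suc (N + m)))" for m
  have u0: "u 0 = det (square_mat_of (border f) (Suc N))"
    unfolding u_def add_0_right by (rule det_square_mat_of_cong) (auto simp: border_def pendant_ext_def)
  have "det (square_mat_of (border (pendant_ext f N p)) (Suc (Suc N))) =
      - 2 * det (square_mat_of (border (pendant_ext f N p)) (Suc N))"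
    by (rule det_square_mat_of_border_pendant[OF p]) (use assms in \<open>auto simp: pendant_ext_def\<close>)
  then have u1: "u 1 + u 0 = - det (square_mat_of (border f) (Suc N))"
    using u0 by (simp add: u_def)
  have rec: "u (m + 2) = - 2 * u (m + 1) - u m" for m
  proof -
    have "det (square_mat_of (border (pendant_ext f N p)) (Suc (Suc (Suc (N + m))))) =
        - 2 * det (square_mat_of (border (pendant_ext f N p)) (Suc (Suc (N + m))))
        - det (square_mat_of (border (pendant_ext f N p)) (Suc (N + m)))"
      by (rule det_square_mat_of_twins) (auto simp: border_def pendant_ext_def)
    then show ?thesis
      by (simp add: u_def)
  qed
  have "u m = (- 1) ^ m * (u 0 - of_nat m * (u 1 + u 0))"
    by (rule double_root_recurrence) (fact rec)
  also have "\<dots> = (- 1) ^ m * (of_nat m + 1) * det (square_mat_of (border f) (Suc N))"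
    unfolding u1 by (simp add: u0 algebra_simps)
  finally show ?thesis
    by (simp add: u_def)
qed

lemma det_pendant_ext:
  fixes f :: "nat \<Rightarrow> nat \<Rightarrow> 'a :: comm_ring_1"
  assumes p: "p < N" and "f p p = 0"
  shows "det (square_mat_of (pendant_ext f N p) (N + m)) =
    (- 1) ^ m * ((of_nat m + 1) * det (square_mat_of f N) - of_nat m * det (square_mat_of (border f) (Suc N)))"
proof -
  define u where "u m = det (square_mat_of (pendant_ext f N p) (N + m))" for m
  have u0: "u 0 = det (square_mat_of f N)"
    unfolding u_def add_0_right by (rule det_square_mat_of_cong) (simp add: pendant_ext_def)
  have "det (square_mat_of (pendant_ext f N p) (Suc N)) =
      det (square_mat_of (border (pendant_ext f N p)) (Suc N)) - 2 * det (square_mat_of (pendant_ext f N p) N)"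
    by (rule det_square_mat_of_pendant[OF p]) (use assms in \<open>auto simp: pendant_ext_def\<close>)
  also have "det (square_mat_of (border (pendant_ext f N p)) (Suc N)) = det (square_mat_of (border f) (Suc N))"
    by (rule det_square_mat_of_cong) (auto simp: border_def pendant_ext_def)
  finally have u1: "u 1 + u 0 = det (square_mat_of (border f) (Suc N)) - det (square_mat_of f N)"
    using u0 by (simp add: u_def)
  have rec: "u (m + 2) = - 2 * u (m + 1) - u m" for m
  proof -
    have "det (square_mat_of (pendant_ext f N p) (Suc (Suc (N + m)))) =
        - 2 * det (square_mat_of (pendant_ext f N p) (Suc (N + m))) - det (square_mat_of (pendant_ext f N p) (N + m))"
      by (rule det_square_mat_of_twins) (auto simp: pendant_ext_def)
    then show ?thesis
      by (simp add: u_def)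
  qed
  have "u m = (- 1) ^ m * (u 0 - of_nat m * (u 1 + u 0))"
    by (rule double_root_recurrence) (fact rec)
  also have "\<dots> = (- 1) ^ m * ((of_nat m + 1) * det (square_mat_of f N)
      - of_nat m * det (square_mat_of (border f) (Suc N)))"
    unfolding u1 by (simp add: u0 algebra_simps)
  finally show ?thesis
    by (simp add: u_def)
qed

lemma ktree_vertices_edges:
  assumes "ktree k V E"
  shows "finite V" "k \<le> card V" "\<Union>E \<subseteq> V"
  using assms by (induction rule: ktree.induct) (auto simp: complete_edges_def is_mclique_def is_clique_def)

lemma is_clique_mono: "V \<subseteq> V' \<Longrightarrow> E \<subseteq> E' \<Longrightarrow> is_clique V E S \<Longrightarrow> is_clique V' E' S"
  unfolding is_clique_def by blast

lemma is_mclique_mono: "V \<subseteq> V' \<Longrightarrow> E \<subseteq> E' \<Longrightarrow> is_mclique m V E S \<Longrightarrow> is_mclique m V' E' S"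
  unfolding is_mclique_def using is_clique_mono by blast

lemma is_mclique_complete_edges_iff:
  assumes "finite V" "card V = k"
  shows "is_mclique k V (complete_edges V) S \<longleftrightarrow> S = V"
proof
  assume "is_mclique k V (complete_edges V) S"
  then have "S \<subseteq> V" "card S = k"
    by (auto simp: is_mclique_def is_clique_def)
  then show "S = V"
    using card_subset_eq[OF assms(1)] assms(2) by simp
next
  assume "S = V"
  then show "is_mclique k V (complete_edges V) S"
    using assms by (auto simp: is_mclique_def is_clique_def complete_edges_def)
qed

lemma kwalk_single: "is_mclique k V E t \<Longrightarrow> kwalk k V E [t] []"
  by (simp add: kwalk_def)

lemma kwalk_last: "kwalk k V E ts ss \<Longrightarrow> ts ! length ss = last ts"
  unfolding kwalk_def by (metis add_diff_cancel_right' last_conv_nth)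

lemma kwalk_cons:
  assumes w: "kwalk k V E ts ss" and "is_mclique k V E t" "is_mclique (k + 1) V E s"
    and "t \<subseteq> s" "hd ts \<subseteq> s"
  shows "kwalk k V E (t # ts) (s # ss)"
proof -
  have "(t # ts) ! i \<subseteq> (s # ss) ! i \<and> (t # ts) ! Suc i \<subseteq> (s # ss) ! i"
    if "i < Suc (length ss)" for i
    using w that assms(4,5) by (cases i) (auto simp: kwalk_def hd_conv_nth)
  then show ?thesis
    using w assms(2,3) unfolding kwalk_def by auto
qed

lemma kwalk_snoc:
  assumes w: "kwalk k V E ts ss" and "is_mclique k V E t" "is_mclique (k + 1) V E s"
    and "t \<subseteq> s" "last ts \<subseteq> s"
  shows "kwalk k V E (ts @ [t]) (ss @ [s])"
proof -
  have "(ts @ [t]) ! i \<subseteq> (ss @ [s]) ! i \<and> (ts @ [t]) ! Suc i \<subseteq> (ss @ [s]) ! i"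
    if "i < Suc (length ss)" for i
  proof (cases "i < length ss")
    case True
    then show ?thesis
      using w by (auto simp: kwalk_def nth_append)
  next
    case False
    then have "i = length ss"
      using that by simp
    then show ?thesis
      using w assms(4,5) kwalk_last[OF w] by (auto simp: kwalk_def nth_append)
  qed
  then show ?thesis
    using w assms(2,3) unfolding kwalk_def by auto
qed

lemma kwalk_mono: "V \<subseteq> V' \<Longrightarrow> E \<subseteq> E' \<Longrightarrow> kwalk k V E ts ss \<Longrightarrow> kwalk k V' E' ts ss"
  unfolding kwalk_def using is_mclique_mono by blast

lemma kdist_le_length:
  "kwalk k V E ts ss \<Longrightarrow> hd ts = a \<Longrightarrow> last ts = b \<Longrightarrow> kdist k V E a b \<le> length ss"
  unfolding kdist_def by (rule Least_le) blast

lemma kdist_shortest_walk: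
  assumes "kwalk k V E ts ss" "hd ts = a" "last ts = b"
  obtains ts' ss' where "kwalk k V E ts' ss'" "hd ts' = a" "last ts' = b" "length ss' = kdist k V E a b"
proof -
  have "\<exists>ts ss. kwalk k V E ts ss \<and> hd ts = a \<and> last ts = b \<and> length ss = kdist k V E a b"
    unfolding kdist_def by (rule LeastI_ex) (use assms in blast)
  then show ?thesis
    using that by blast
qed

lemma kdist_self: "is_mclique k V E a \<Longrightarrow> kdist k V E a a = 0"
  using kdist_le_length[OF kwalk_single, of k V E a a a] by simp

(* kdist is a LEAST over walks, hence a junk value for k-cliques that no walk joins. *)
definition kconnected :: "nat \<Rightarrow> 'a set \<Rightarrow> 'a set set \<Rightarrow> bool" where
  "kconnected k V E \<longleftrightarrow> (\<forall>a b. is_mclique k V E a \<longrightarrow> is_mclique k V E b \<longrightarrow>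
      (\<exists>ts ss. kwalk k V E ts ss \<and> hd ts = a \<and> last ts = b))"

lemma kconnected_shortest_walk:
  assumes "kconnected k V E" "is_mclique k V E a" "is_mclique k V E b"
  obtains ts ss where "kwalk k V E ts ss" "hd ts = a" "last ts = b" "length ss = kdist k V E a b"
  using assms kdist_shortest_walk unfolding kconnected_def by metis

definition kclique_lipschitz :: "nat \<Rightarrow> 'a set \<Rightarrow> 'a set set \<Rightarrow> ('a set \<Rightarrow> int) \<Rightarrow> bool" where
  "kclique_lipschitz k V E h \<longleftrightarrow> (\<forall>s t t'. is_mclique (k + 1) V E s \<longrightarrow>
      is_mclique k V E t \<longrightarrow> is_mclique k V E t' \<longrightarrow> t \<subseteq> s \<longrightarrow> t' \<subseteq> s \<longrightarrow> h t - h t' \<le> 1)"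

lemma kwalk_lipschitz:
  assumes w: "kwalk k V E ts ss" and h: "kclique_lipschitz k V E h"
  shows "h (hd ts) - h (last ts) \<le> int (length ss)"
proof -
  have "h (ts ! 0) - h (ts ! i) \<le> int i" if "i \<le> length ss" for i
    using that
  proof (induction i)
    case (Suc i)
    then have "i < length ss"
      by simp
    then have "is_mclique (k + 1) V E (ss ! i)" "is_mclique k V E (ts ! i)"
      "is_mclique k V E (ts ! Suc i)" "ts ! i \<subseteq> ss ! i" "ts ! Suc i \<subseteq> ss ! i"
      using w unfolding kwalk_def by auto
    then have "h (ts ! i) - h (ts ! Suc i) \<le> 1"
      using h unfolding kclique_lipschitz_def by blast
    then show ?case
      using Suc by simp
  qed simp
  then show ?thesis
    using w kwalk_last[OF w] by (force simp: kwalk_def hd_conv_nth)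
qed

lemma kdist_lipschitz:
  assumes "kconnected k V E" "is_mclique k V E a" "is_mclique k V E b" "kclique_lipschitz k V E h"
  shows "h a - h b \<le> int (kdist k V E a b)"
  using kconnected_shortest_walk[OF assms(1-3)] kwalk_lipschitz assms(4) by metis

lemma kclique_lipschitz_kdist_to:
  assumes conn: "kconnected k V E" and b: "is_mclique k V E b"
  shows "kclique_lipschitz k V E (\<lambda>t. int (kdist k V E t b))"
  unfolding kclique_lipschitz_def
proof (intro allI impI)
  fix s t t'
  assume cl: "is_mclique (k + 1) V E s" "is_mclique k V E t" "is_mclique k V E t'"
    and sub: "t \<subseteq> s" "t' \<subseteq> s"
  obtain ts ss where w: "kwalk k V E ts ss" "hd ts = t'" "last ts = b" "length ss = kdist k V E t' b"
    using kconnected_shortest_walk[OF conn cl(3) b] .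
  have "kwalk k V E (t # ts) (s # ss)"
    by (rule kwalk_cons) (use w cl sub in auto)
  then have "kdist k V E t b \<le> length (s # ss)"
    using kdist_le_length w by (metis kwalk_def last_ConsR list.sel(1))
  then show "int (kdist k V E t b) - int (kdist k V E t' b) \<le> 1"
    using w by simp
qed

lemma kclique_lipschitz_kdist_from:
  assumes conn: "kconnected k V E" and a: "is_mclique k V E a"
  shows "kclique_lipschitz k V E (\<lambda>t. - int (kdist k V E a t))"
  unfolding kclique_lipschitz_def
proof (intro allI impI)
  fix s t t'
  assume cl: "is_mclique (k + 1) V E s" "is_mclique k V E t" "is_mclique k V E t'"
    and sub: "t \<subseteq> s" "t' \<subseteq> s"
  obtain ts ss where w: "kwalk k V E ts ss" "hd ts = a" "last ts = t" "length ss = kdist k V E a t"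
    using kconnected_shortest_walk[OF conn a cl(2)] .
  have "kwalk k V E (ts @ [t']) (ss @ [s])"
    by (rule kwalk_snoc) (use w cl sub in auto)
  moreover have "hd (ts @ [t']) = a"
    using w(1,2) by (simp add: kwalk_def)
  ultimately have "kdist k V E a t' \<le> length (ss @ [s])"
    using kdist_le_length[of k V E "ts @ [t']" "ss @ [s]" a t'] by simp
  then show "- int (kdist k V E a t) - - int (kdist k V E a t') \<le> 1"
    using w by simp
qed

definition kdist_entries :: "nat \<Rightarrow> 'a set \<Rightarrow> 'a set set \<Rightarrow> 'a set list \<Rightarrow> nat \<Rightarrow> nat \<Rightarrow> int" where
  "kdist_entries k V E cs i j = int (kdist k V E (cs ! i) (cs ! j))"

lemma kdist_matrix_eq_square_mat_of:
  assumes "set cs \<subseteq> kcliques k V E"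
  shows "kdist_matrix k V E cs = square_mat_of (kdist_entries k V E cs) (length cs)"
proof -
  have "is_mclique k V E (cs ! i)" if "i < length cs" for i
    using assms nth_mem[OF that] by (auto simp: kcliques_def)
  then show ?thesis
    by (intro eq_matI) (auto simp: kdist_matrix_def kdist_entries_def kdist_self)
qed

locale clique_extension =
  fixes k :: nat and V :: "'a set" and E :: "'a set set" and x :: 'a and C :: "'a set"
  assumes x_notin_V: "x \<notin> V" and edges_subset: "\<Union>E \<subseteq> V" and clique_C: "is_mclique k V E C"
begin

abbreviation E' :: "'a set set" where
  "E' \<equiv> E \<union> {{x, c} | c. c \<in> C}"

definition new_kclique :: "'a \<Rightarrow> 'a set" where
  "new_kclique c = insert x (C - {c})"

lemma C_subset_V: "C \<subseteq> V"
  using clique_C by (auto simp: is_mclique_def is_clique_def)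

lemma x_notin_C: "x \<notin> C"
  using C_subset_V x_notin_V by auto

lemma finite_C: "finite C" and card_C: "card C = k"
  using clique_C by (auto simp: is_mclique_def)

lemma x_notin_old_clique: "is_mclique m V E S \<Longrightarrow> x \<notin> S"
  using x_notin_V by (auto simp: is_mclique_def is_clique_def)

lemma is_mclique_extend: "is_mclique m V E S \<Longrightarrow> is_mclique m (insert x V) E' S"
  by (rule is_mclique_mono) auto

lemma edge_extension_iff: "{u, v} \<in> E' \<longleftrightarrow> {u, v} \<in> E \<or> (u = x \<and> v \<in> C) \<or> (v = x \<and> u \<in> C)"
  by (auto simp: doubleton_eq_iff insert_commute)

lemma is_clique_extension_iff:
  "is_clique (insert x V) E' S \<longleftrightarrow> (x \<notin> S \<and> is_clique V E S) \<or> (x \<in> S \<and> S - {x} \<subseteq> C)"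
proof (cases "x \<in> S")
  case False
  then show ?thesis
    unfolding is_clique_def edge_extension_iff by blast
next
  case True
  have "{x, u} \<notin> E" for u
    using edges_subset x_notin_V by auto
  then show ?thesis
    using True clique_C C_subset_V unfolding is_clique_def is_mclique_def edge_extension_iff
    by (smt (verit) Diff_iff insert_iff insert_subset singletonD subset_eq)
qed

lemma is_mclique_extension_iff:
  "is_mclique m (insert x V) E' S \<longleftrightarrow>
    (x \<notin> S \<and> is_mclique m V E S) \<or> (x \<in> S \<and> S - {x} \<subseteq> C \<and> card S = m)"
proof -
  have "finite S" if "S - {x} \<subseteq> C"
    using that finite_C by (metis finite_Diff2 finite_subset finite.emptyI finite_insert)
  then show ?thesis
    unfolding is_mclique_def is_clique_extension_iff by blast
qed

lemma x_in_new_kclique: "x \<in> new_kclique c"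
  by (simp add: new_kclique_def)

lemma new_kclique_subset: "new_kclique c \<subseteq> insert x C"
  by (auto simp: new_kclique_def)

lemma new_kclique_inj: "inj_on new_kclique C"
proof (rule inj_onI)
  fix c c' assume "c \<in> C" "c' \<in> C" "new_kclique c = new_kclique c'"
  then show "c = c'"
    using x_notin_C by (auto simp: new_kclique_def insert_ident)
qed

lemma is_kclique_extension_iff:
  "is_mclique k (insert x V) E' S \<longleftrightarrow> is_mclique k V E S \<or> (\<exists>c\<in>C. S = new_kclique c)"
proof
  assume "is_mclique k (insert x V) E' S"
  then consider "is_mclique k V E S" | "x \<in> S" "S - {x} \<subseteq> C" "card S = k"
    unfolding is_mclique_extension_iff by blast
  then show "is_mclique k V E S \<or> (\<exists>c\<in>C. S = new_kclique c)"
  proof cases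
    case 2
    have "finite (S - {x})"
      using 2 finite_C finite_subset by blast
    then have card: "card (S - {x}) = k - 1" and "k \<noteq> 0"
      using 2 by (auto simp: card_gt_0_iff)
    then have "S - {x} \<noteq> C"
      using card_C by auto
    then obtain c where c: "c \<in> C" "c \<notin> S - {x}"
      using 2 by blast
    have "S - {x} = C - {c}"
      using 2 c card finite_C card_C by (intro card_subset_eq) auto
    then have "S = new_kclique c"
      using 2 by (auto simp: new_kclique_def)
    then show ?thesis
      using c by auto
  qed auto
next
  assume "is_mclique k V E S \<or> (\<exists>c\<in>C. S = new_kclique c)"
  then show "is_mclique k (insert x V) E' S"
  proof
    assume "\<exists>c\<in>C. S = new_kclique c"
    then obtain c where c: "c \<in> C" "S = new_kclique c"
      by blast
    moreover have "card C \<noteq> 0"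
      using c(1) finite_C by auto
    ultimately show ?thesis
      unfolding is_mclique_extension_iff using finite_C card_C x_notin_C
      by (auto simp: new_kclique_def card_insert_if)
  qed (rule is_mclique_extend)
qed

lemma is_k1clique_extension_iff:
  "is_mclique (Suc k) (insert x V) E' S \<longleftrightarrow> is_mclique (Suc k) V E S \<or> S = insert x C"
proof
  assume "is_mclique (Suc k) (insert x V) E' S"
  then consider "is_mclique (Suc k) V E S" | "x \<in> S" "S - {x} \<subseteq> C" "card S = Suc k"
    unfolding is_mclique_extension_iff by blast
  then show "is_mclique (Suc k) V E S \<or> S = insert x C"
  proof cases
    case 2
    then have "S - {x} = C"
      using finite_C card_C finite_subset by (intro card_subset_eq) auto
    then show ?thesis
      using 2 by auto
  qed auto
next
  assume "is_mclique (Suc k) V E S \<or> S = insert x C"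
  then show "is_mclique (Suc k) (insert x V) E' S"
  proof
    assume "S = insert x C"
    then show ?thesis
      unfolding is_mclique_extension_iff using x_notin_C finite_C card_C by auto
  qed (rule is_mclique_extend)
qed

lemma kcliques_extension: "kcliques k (insert x V) E' = kcliques k V E \<union> new_kclique ` C"
  unfolding kcliques_def is_kclique_extension_iff by auto

lemma new_kclique_is_kclique:
  "c \<in> C \<Longrightarrow> is_mclique k (insert x V) E' (new_kclique c)"
  using is_kclique_extension_iff by blast

lemma insert_is_k1clique: "is_mclique (k + 1) (insert x V) E' (insert x C)"
  using is_k1clique_extension_iff by simp

lemma kwalk_cons_new_kclique:
  assumes w: "kwalk k V E ts ss" "hd ts = C" and c: "c \<in> C"
  shows "kwalk k (insert x V) E' (new_kclique c # ts) (insert x C # ss)"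
  using w new_kclique_is_kclique[OF c] insert_is_k1clique new_kclique_subset
  by (intro kwalk_cons kwalk_mono[OF _ _ w(1)]) auto

lemma kwalk_snoc_new_kclique:
  assumes w: "kwalk k V E ts ss" "last ts = C" and c: "c \<in> C"
  shows "kwalk k (insert x V) E' (ts @ [new_kclique c]) (ss @ [insert x C])"
  using w new_kclique_is_kclique[OF c] insert_is_k1clique new_kclique_subset
  by (intro kwalk_snoc kwalk_mono[OF _ _ w(1)]) auto

lemma kclique_lipschitz_extend:
  assumes h: "kclique_lipschitz k V E h" and "\<bar>\<delta>\<bar> \<le> 1"
  shows "kclique_lipschitz k (insert x V) E' (\<lambda>t. if x \<in> t then h C + \<delta> else h t)"
  unfolding kclique_lipschitz_def
proof (intro allI impI)
  fix s t t'
  assume s: "is_mclique (k + 1) (insert x V) E' s"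
    and t: "is_mclique k (insert x V) E' t" "is_mclique k (insert x V) E' t'"
    and sub: "t \<subseteq> s" "t' \<subseteq> s"
  from s consider "is_mclique (Suc k) V E s" | "s = insert x C"
    using is_k1clique_extension_iff by auto
  then show "(if x \<in> t then h C + \<delta> else h t) - (if x \<in> t' then h C + \<delta> else h t') \<le> 1"
  proof cases
    case 1
    then have "x \<notin> t" "x \<notin> t'"
      using x_notin_old_clique sub by auto
    then have "is_mclique k V E t" "is_mclique k V E t'"
      using t is_kclique_extension_iff x_in_new_kclique by blast+
    then show ?thesis
      using h 1 sub \<open>x \<notin> t\<close> \<open>x \<notin> t'\<close> unfolding kclique_lipschitz_def by simp
  next
    case 2
    have eq_C: "u = C" if "u \<subseteq> s" "x \<notin> u" "is_mclique k (insert x V) E' u" for u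
      using that 2 finite_C card_C card_subset_eq[of C u] by (auto simp: is_mclique_def)
    show ?thesis
      using eq_C[OF sub(1) _ t(1)] eq_C[OF sub(2) _ t(2)] assms(2) by auto
  qed
qed

lemma kconnected_extension:
  assumes conn: "kconnected k V E"
  shows "kconnected k (insert x V) E'"
  unfolding kconnected_def
proof (intro allI impI)
  fix a b
  assume a: "is_mclique k (insert x V) E' a" and b: "is_mclique k (insert x V) E' b"
  show "\<exists>ts ss. kwalk k (insert x V) E' ts ss \<and> hd ts = a \<and> last ts = b"
  proof (cases "is_mclique k V E a"; cases "is_mclique k V E b")
    assume "is_mclique k V E a" "is_mclique k V E b"
    then obtain ts ss where w: "kwalk k V E ts ss" "hd ts = a" "last ts = b"
      using conn unfolding kconnected_def by blast
    have "kwalk k (insert x V) E' ts ss"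
      by (rule kwalk_mono[OF _ _ w(1)]) auto
    then show ?thesis
      using w by blast
  next
    assume a_old: "is_mclique k V E a" and "\<not> is_mclique k V E b"
    then obtain c where c: "c \<in> C" "b = new_kclique c"
      using b is_kclique_extension_iff[of b] by blast
    obtain ts ss where w: "kwalk k V E ts ss" "hd ts = a" "last ts = C"
      using conn a_old clique_C unfolding kconnected_def by blast
    have "kwalk k (insert x V) E' (ts @ [b]) (ss @ [insert x C])"
      using kwalk_snoc_new_kclique[OF w(1,3) c(1)] c(2) by simp
    moreover have "hd (ts @ [b]) = a"
      using w by (simp add: kwalk_def)
    ultimately show ?thesis
      by auto
  next
    assume "\<not> is_mclique k V E a" and b_old: "is_mclique k V E b"
    then obtain c where c: "c \<in> C" "a = new_kclique c"
      using a is_kclique_extension_iff[of a] by blast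
    obtain ts ss where w: "kwalk k V E ts ss" "hd ts = C" "last ts = b"
      using conn b_old clique_C unfolding kconnected_def by blast
    have "kwalk k (insert x V) E' (a # ts) (insert x C # ss)"
      using kwalk_cons_new_kclique[OF w(1,2) c(1)] c(2) by simp
    moreover have "last (a # ts) = b"
      using w by (simp add: kwalk_def)
    ultimately show ?thesis
      by auto
  next
    assume "\<not> is_mclique k V E a" "\<not> is_mclique k V E b"
    then have "a \<subseteq> insert x C" "b \<subseteq> insert x C"
      using a b is_kclique_extension_iff[of a] is_kclique_extension_iff[of b] new_kclique_subset
      by blast+
    then have "kwalk k (insert x V) E' [a, b] [insert x C]"
      using a b insert_is_k1clique unfolding kwalk_def by auto
    then show ?thesis
      by auto
  qed
qed

end

locale connected_clique_extension = clique_extension +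
  assumes kconnected: "kconnected k V E"
begin

lemma kdist_extension_old_old:
  assumes a: "is_mclique k V E a" and b: "is_mclique k V E b"
  shows "kdist k (insert x V) E' a b = kdist k V E a b"
proof (rule antisym)
  obtain ts ss where w: "kwalk k V E ts ss" "hd ts = a" "last ts = b" "length ss = kdist k V E a b"
    using kconnected_shortest_walk[OF kconnected a b] .
  have "kwalk k (insert x V) E' ts ss"
    by (rule kwalk_mono[OF _ _ w(1)]) auto
  from kdist_le_length[OF this w(2,3)]
  show "kdist k (insert x V) E' a b \<le> kdist k V E a b"
    using w(4) by simp
next
  have "kclique_lipschitz k (insert x V) E'
      (\<lambda>t. if x \<in> t then int (kdist k V E C b) + 0 else int (kdist k V E t b))"
    by (rule kclique_lipschitz_extend[OF kclique_lipschitz_kdist_to[OF kconnected b]]) simp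
  from kdist_lipschitz[OF kconnected_extension[OF kconnected] is_mclique_extend[OF a]
      is_mclique_extend[OF b] this]
  show "kdist k V E a b \<le> kdist k (insert x V) E' a b"
    using x_notin_old_clique[OF a] x_notin_old_clique[OF b] kdist_self[OF b] by simp
qed

lemma kdist_extension_new_old:
  assumes c: "c \<in> C" and b: "is_mclique k V E b"
  shows "kdist k (insert x V) E' (new_kclique c) b = kdist k V E C b + 1"
proof (rule antisym)
  obtain ts ss where w: "kwalk k V E ts ss" "hd ts = C" "last ts = b" "length ss = kdist k V E C b"
    using kconnected_shortest_walk[OF kconnected clique_C b] .
  have "kwalk k (insert x V) E' (new_kclique c # ts) (insert x C # ss)"
    by (rule kwalk_cons_new_kclique[OF w(1,2) c])
  moreover have "last (new_kclique c # ts) = b"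
    using w by (simp add: kwalk_def)
  ultimately show "kdist k (insert x V) E' (new_kclique c) b \<le> kdist k V E C b + 1"
    using kdist_le_length[of k "insert x V" E' "new_kclique c # ts" "insert x C # ss"] w(4) by simp
next
  have "kclique_lipschitz k (insert x V) E'
      (\<lambda>t. if x \<in> t then int (kdist k V E C b) + 1 else int (kdist k V E t b))"
    by (rule kclique_lipschitz_extend[OF kclique_lipschitz_kdist_to[OF kconnected b]]) simp
  from kdist_lipschitz[OF kconnected_extension[OF kconnected] new_kclique_is_kclique[OF c]
      is_mclique_extend[OF b] this]
  show "kdist k V E C b + 1 \<le> kdist k (insert x V) E' (new_kclique c) b"
    using x_in_new_kclique x_notin_old_clique[OF b] kdist_self[OF b] by simp
qed

lemma kdist_extension_old_new:
  assumes c: "c \<in> C" and a: "is_mclique k V E a"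
  shows "kdist k (insert x V) E' a (new_kclique c) = kdist k V E a C + 1"
proof (rule antisym)
  obtain ts ss where w: "kwalk k V E ts ss" "hd ts = a" "last ts = C" "length ss = kdist k V E a C"
    using kconnected_shortest_walk[OF kconnected a clique_C] .
  have "kwalk k (insert x V) E' (ts @ [new_kclique c]) (ss @ [insert x C])"
    by (rule kwalk_snoc_new_kclique[OF w(1,3) c])
  moreover have "hd (ts @ [new_kclique c]) = a"
    using w by (simp add: kwalk_def)
  ultimately show "kdist k (insert x V) E' a (new_kclique c) \<le> kdist k V E a C + 1"
    using kdist_le_length[of k "insert x V" E' "ts @ [new_kclique c]" "ss @ [insert x C]"] w(4)
    by simp
next
  have "kclique_lipschitz k (insert x V) E'
      (\<lambda>t. if x \<in> t then - int (kdist k V E a C) + (- 1) else - int (kdist k V E a t))"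
    by (rule kclique_lipschitz_extend[OF kclique_lipschitz_kdist_from[OF kconnected a]]) simp
  from kdist_lipschitz[OF kconnected_extension[OF kconnected] is_mclique_extend[OF a]
      new_kclique_is_kclique[OF c] this]
  show "kdist k V E a C + 1 \<le> kdist k (insert x V) E' a (new_kclique c)"
    using x_in_new_kclique x_notin_old_clique[OF a] kdist_self[OF a] by simp
qed

lemma kdist_extension_new_new:
  assumes c: "c \<in> C" "c' \<in> C" "c \<noteq> c'"
  shows "kdist k (insert x V) E' (new_kclique c) (new_kclique c') = 1"
proof (rule antisym)
  have "kwalk k (insert x V) E' [new_kclique c, new_kclique c'] [insert x C]"
    using c new_kclique_is_kclique insert_is_k1clique new_kclique_subset
    unfolding kwalk_def by auto
  then show "kdist k (insert x V) E' (new_kclique c) (new_kclique c') \<le> 1"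
    using kdist_le_length[of k "insert x V" E' "[new_kclique c, new_kclique c']" "[insert x C]"] by simp
  have "new_kclique c \<noteq> new_kclique c'"
    using c new_kclique_inj by (auto dest: inj_onD)
  moreover have "kclique_lipschitz k (insert x V) E' (\<lambda>t. if t = new_kclique c then 1 else 0)"
    unfolding kclique_lipschitz_def by simp
  ultimately show "1 \<le> kdist k (insert x V) E' (new_kclique c) (new_kclique c')"
    using kdist_lipschitz[OF kconnected_extension[OF kconnected] new_kclique_is_kclique[OF c(1)]
        new_kclique_is_kclique[OF c(2)], of "\<lambda>t. if t = new_kclique c then 1 else 0"]
    by simp
qed

lemma kdist_append_new_kcliques:
  assumes cs: "set cs \<subseteq> kcliques k V E" and p: "p < length cs" "cs ! p = C"
    and cl: "distinct cl" "set cl = C"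
    and ij: "i < length cs + k" "j < length cs + k"
  shows "kdist_entries k (insert x V) E' (cs @ map new_kclique cl) i j =
    pendant_ext (kdist_entries k V E cs) (length cs) p i j"
proof -
  define N where "N = length cs"
  have len: "length cl = k"
    using cl card_C distinct_card by metis
  have cs_cliques: "is_mclique k V E t" if "t \<in> set cs" for t
    using cs that by (auto simp: kcliques_def)
  have old: "(cs @ map new_kclique cl) ! i = cs ! i" "is_mclique k V E (cs ! i)" if "i < N" for i
    using that cs_cliques[OF nth_mem] by (auto simp: N_def nth_append)
  have new: "(cs @ map new_kclique cl) ! i = new_kclique (cl ! (i - N))" "cl ! (i - N) \<in> C"
    if "\<not> i < N" "i < N + k" for i
    using that len cl by (auto simp: N_def nth_append)
  consider "i < N" "j < N" | "i < N" "\<not> j < N" | "\<not> i < N" "j < N" | "\<not> i < N" "\<not> j < N"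
    by blast
  then show ?thesis
  proof cases
    case 1
    then show ?thesis
      using old by (simp add: pendant_ext_def kdist_entries_def kdist_extension_old_old flip: N_def)
  next
    case 2
    then show ?thesis
      using old new ij p by (simp add: pendant_ext_def kdist_entries_def kdist_extension_old_new flip: N_def)
  next
    case 3
    then show ?thesis
      using old new ij p by (simp add: pendant_ext_def kdist_entries_def kdist_extension_new_old flip: N_def)
  next
    case 4
    then have ci: "cl ! (i - N) \<in> C" and cj: "cl ! (j - N) \<in> C"
      using new ij by (auto simp: N_def)
    show ?thesis
    proof (cases "i = j")
      case True
      then show ?thesis
        using 4 new ij kdist_self[OF new_kclique_is_kclique[OF ci]]
        by (simp add: pendant_ext_def kdist_entries_def flip: N_def)
    next
      case False
      then have "cl ! (i - N) \<noteq> cl ! (j - N)"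
        using 4 ij cl(1) len by (simp add: N_def nth_eq_iff_index_eq)
      then show ?thesis
        using 4 False new ij kdist_extension_new_new[OF ci cj]
        by (simp add: pendant_ext_def kdist_entries_def flip: N_def)
    qed
  qed
qed

lemma det_kdist_entries_extension:
  assumes cs: "distinct cs" "set cs = kcliques k V E"
  obtains ds where "distinct ds" "set ds = kcliques k (insert x V) E'"
    "det (square_mat_of (kdist_entries k (insert x V) E' ds) (length ds)) =
      (- 1) ^ k * ((int k + 1) * det (square_mat_of (kdist_entries k V E cs) (length cs))
        - int k * det (square_mat_of (border (kdist_entries k V E cs)) (Suc (length cs))))"
    "det (square_mat_of (border (kdist_entries k (insert x V) E' ds)) (Suc (length ds))) =
      (- 1) ^ k * (int k + 1) * det (square_mat_of (border (kdist_entries k V E cs)) (Suc (length cs)))"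
proof -
  obtain cl where cl: "distinct cl" "set cl = C"
    using finite_distinct_list finite_C by blast
  obtain p where p: "p < length cs" "cs ! p = C"
    using clique_C cs(2) by (metis in_set_conv_nth kcliques_def mem_Collect_eq)
  define ds where "ds = cs @ map new_kclique cl"
  define f where "f = kdist_entries k V E cs"
  have len: "length ds = length cs + k"
    using cl card_C distinct_card by (fastforce simp: ds_def)
  have ds_distinct: "distinct ds"
    using cs cl new_kclique_inj x_notin_old_clique x_in_new_kclique
    by (auto simp: ds_def distinct_map kcliques_def inj_on_subset)
  have ds_set: "set ds = kcliques k (insert x V) E'"
    using cs cl by (simp add: ds_def kcliques_extension)
  have D: "square_mat_of (kdist_entries k (insert x V) E' ds) (length cs + k) =
      square_mat_of (pendant_ext f (length cs) p) (length cs + k)"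
    unfolding ds_def f_def
    by (rule square_mat_of_cong) (rule kdist_append_new_kcliques[OF _ p cl]; use cs in simp)
  have f: "f p p = 0"
    using p kdist_self clique_C by (simp add: f_def kdist_entries_def)
  have "det (square_mat_of (kdist_entries k (insert x V) E' ds) (length ds)) =
      (- 1) ^ k * ((int k + 1) * det (square_mat_of f (length cs))
        - int k * det (square_mat_of (border f) (Suc (length cs))))"
    using D len det_pendant_ext[where f = f, OF p(1) f] by simp
  moreover have "det (square_mat_of (border (kdist_entries k (insert x V) E' ds)) (Suc (length ds))) =
      (- 1) ^ k * (int k + 1) * det (square_mat_of (border f) (Suc (length cs)))"
    using square_mat_of_border_cong[OF D] len det_border_pendant_ext[where f = f, OF p(1) f] by simp
  ultimately show ?thesis
    using ds_distinct ds_set unfolding f_def by (intro that)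
qed

end

lemma ktree_kconnected: "ktree k V E \<Longrightarrow> kconnected k V E"
proof (induction rule: ktree.induct)
  case (base V)
  have "kwalk k V (complete_edges V) [V] []"
    by (rule kwalk_single) (simp add: is_mclique_complete_edges_iff[OF base])
  then show ?case
    unfolding kconnected_def is_mclique_complete_edges_iff[OF base] by force
next
  case (step V E x C)
  then interpret clique_extension k V E x C
    by unfold_locales (auto dest: ktree_vertices_edges(3))
  show ?case
    by (rule kconnected_extension) fact
qed

definition ktree_dist_det :: "nat \<Rightarrow> nat \<Rightarrow> int" where
  "ktree_dist_det k b = (- 1) ^ (k * b) * int k * (int k + 1) ^ (b - 1) * int b"

definition ktree_border_det :: "nat \<Rightarrow> nat \<Rightarrow> int" where
  "ktree_border_det k b = - ((- 1) ^ (k * b) * (int k + 1) ^ b)"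

lemma ktree_dist_det_Suc:
  "(- 1) ^ k * ((int k + 1) * ktree_dist_det k b - int k * ktree_border_det k b) = ktree_dist_det k (Suc b)"
  by (cases b) (simp_all add: ktree_dist_det_def ktree_border_det_def power_add algebra_simps)

lemma ktree_border_det_Suc:
  "(- 1) ^ k * (int k + 1) * ktree_border_det k b = ktree_border_det k (Suc b)"
  by (simp add: ktree_border_det_def power_add algebra_simps)

lemma ktree_det_kdist_entries:
  assumes "ktree k V E"
  shows "\<exists>cs. distinct cs \<and> set cs = kcliques k V E \<and>
    det (square_mat_of (kdist_entries k V E cs) (length cs)) = ktree_dist_det k (card V - k) \<and>
    det (square_mat_of (border (kdist_entries k V E cs)) (Suc (length cs))) =
      ktree_border_det k (card V - k)"
  using assms
proof (induction rule: ktree.induct)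
  case (base V)
  let ?f = "kdist_entries k V (complete_edges V) [V]"
  have f: "?f 0 0 = 0"
    using kdist_self[of k V "complete_edges V" V] is_mclique_complete_edges_iff[OF base]
    by (simp add: kdist_entries_def)
  have "det (square_mat_of ?f 1) = 0"
    using det_square_mat_of_last_col_zero[of 0 ?f] f by simp
  moreover have "det (square_mat_of (border ?f) (Suc (Suc 0))) = - 1"
    using det_square_mat_of_twins[of 0 "border ?f"] det_square_mat_of_last_col_zero[of 0 "border ?f"] f
    by (simp add: border_def)
  moreover have "kcliques k V (complete_edges V) = {V}"
    using is_mclique_complete_edges_iff[OF base] by (auto simp: kcliques_def)
  ultimately show ?case
    using base by (intro exI[of _ "[V]"]) (simp add: ktree_dist_det_def ktree_border_det_def)
next
  case (step V E x C)
  interpret connected_clique_extension k V E x C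
    using step.hyps ktree_vertices_edges(3)[OF step.hyps(1)] ktree_kconnected[OF step.hyps(1)]
    by unfold_locales auto
  obtain cs where cs: "distinct cs" "set cs = kcliques k V E"
    and IH: "det (square_mat_of (kdist_entries k V E cs) (length cs)) = ktree_dist_det k (card V - k)"
      "det (square_mat_of (border (kdist_entries k V E cs)) (Suc (length cs))) =
        ktree_border_det k (card V - k)"
    using step.IH by blast
  obtain ds where ds: "distinct ds" "set ds = kcliques k (insert x V) E'"
    and dets: "det (square_mat_of (kdist_entries k (insert x V) E' ds) (length ds)) =
      (- 1) ^ k * ((int k + 1) * det (square_mat_of (kdist_entries k V E cs) (length cs))
        - int k * det (square_mat_of (border (kdist_entries k V E cs)) (Suc (length cs))))"
      "det (square_mat_of (border (kdist_entries k (insert x V) E' ds)) (Suc (length ds))) =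
      (- 1) ^ k * (int k + 1) * det (square_mat_of (border (kdist_entries k V E cs)) (Suc (length cs)))"
    by (rule det_kdist_entries_extension[OF cs])
  have "card (insert x V) - k = Suc (card V - k)"
    using ktree_vertices_edges[OF step.hyps(1)] x_notin_V by simp
  then show ?case
    using ds dets unfolding IH ktree_dist_det_Suc ktree_border_det_Suc
    by (intro exI[of _ ds]) simp
qed

theorem mainTheorem3:
  fixes k n :: nat and V :: "'a set" and E :: "'a set set" and cs :: "'a set list"
  assumes "k \<ge> 1" and "n \<ge> k + 2"
    and "ktree k V E" and "card V = n"
    and "distinct cs" and "set cs = kcliques k V E"
  shows "det (kdist_matrix k V E cs)
         = (-1) ^ (k * (n - k)) * int k * (int k + 1) ^ (n - k - 1) * int (n - k)"
proof -
  obtain ds where ds: "distinct ds" "set ds = kcliques k V E"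
    "det (square_mat_of (kdist_entries k V E ds) (length ds)) = ktree_dist_det k (card V - k)"
    using ktree_det_kdist_entries[OF assms(3)] by blast
  have "det (kdist_matrix k V E cs) = det (square_mat_of (kdist_entries k V E cs) (length cs))"
    using kdist_matrix_eq_square_mat_of[of cs k V E] assms(6) by simp
  also have "\<dots> = det (square_mat_of (kdist_entries k V E ds) (length ds))"
    unfolding kdist_entries_def by (rule det_square_mat_of_reindex) (use assms(5,6) ds in auto)
  also have "\<dots> = ktree_dist_det k (n - k)"
    using ds(3) assms(4) by simp
  finally show ?thesis
    by (simp add: ktree_dist_det_def)
qed

end
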